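(* Let $c \in \mathbb{Z}$ with $c \equiv 1 \pmod 4$. Fix an algebraic closure $\overline{\mathbb{Q}}_2$ of $\mathbb{Q}_2$, an element $\delta \in \overline{\mathbb{Q}}_2$ with $\delta^2 = -c$, and elements $\alpha, \beta \in \overline{\mathbb{Q}}_2$ with $\alpha^2 = -c + \delta$ and $\beta^2 = -c - \delta$. Let $L_c = \mathbb{Q}_2(\alpha,\beta)$, and let $v_\pi$ be the valuation on $L_c$ normalized so that $v_\pi(2) = 8$. Then for every choice of signs, $v_\pi(\pm\alpha \pm \alpha\beta \pm \beta) = 6$.
   Context: For $c \equiv 1 \pmod 4$, the extension $L_c/\mathbb{Q}_2$ is totally ramified of degree $8$, so $v_\pi$ is the normalized valuation associated to a uniformizer of $L_c$, and $v_\pi(x) = 8 v_2(x)$ where $v_2$ is the $2$-adic valuation extended to $\overline{\mathbb{Q}}_2$. *)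

theory Defs
  imports "HOL-Computational_Algebra.Computational_Algebra"
begin

text \<open>A (rank one, real-valued) valuation on a field, given on nonzero elements,
  extending the 2-adic valuation v_2 of the rationals.  The valuation of 0 is
  +infinity by convention and is never used.\<close>
definition ext_2adic_valuation :: "('a::field \<Rightarrow> real) \<Rightarrow> bool" where
  "ext_2adic_valuation v \<longleftrightarrow>
     (\<forall>x y. x \<noteq> 0 \<longrightarrow> y \<noteq> 0 \<longrightarrow> v (x * y) = v x + v y) \<and>
     (\<forall>x y. x \<noteq> 0 \<longrightarrow> y \<noteq> 0 \<longrightarrow> x + y \<noteq> 0 \<longrightarrow> v (x + y) \<ge> min (v x) (v y)) \<and>
     (\<forall>n::int. n \<noteq> 0 \<longrightarrow> of_int n \<noteq> (0::'a) \<and> v (of_int n) = real (multiplicity (2::int) n))"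

end

theory Submission
  imports Defs
begin

text \<open>Put \<open>\<gamma> = \<alpha>\<beta>\<close> and normalise \<open>v(2) = 1\<close>.  Since \<open>\<gamma>\<^sup>2 = c(c + 1)\<close> is twice an odd integer,
  \<open>v(\<gamma>) = 1/2\<close>.  The element \<open>a = \<pm>\<alpha> \<pm> \<gamma> \<pm> \<beta>\<close> times its conjugate \<open>b\<close> (the sign of \<open>\<gamma>\<close> flipped)
  is \<open>\<pm>2\<gamma> - c(c + 3)\<close>; as \<open>4\<close> divides \<open>c(c + 3)\<close>, this has valuation \<open>v(2\<gamma>) = 3/2\<close>.  Finally
  \<open>a - b = \<pm>2\<gamma>\<close> has valuation \<open>3/2 \<ge> 3/4\<close>, the average valuation of \<open>a\<close> and \<open>b\<close>, which forces
  \<open>v(a) = v(b) = 3/4\<close>.\<close>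

locale two_adic_valuation =
  fixes v :: "'a::field \<Rightarrow> real"
  assumes ext_2adic: "ext_2adic_valuation v"
begin

lemma mult: "x \<noteq> 0 \<Longrightarrow> y \<noteq> 0 \<Longrightarrow> v (x * y) = v x + v y"
  using ext_2adic unfolding ext_2adic_valuation_def by blast

lemma ultrametric: "x \<noteq> 0 \<Longrightarrow> y \<noteq> 0 \<Longrightarrow> x + y \<noteq> 0 \<Longrightarrow> min (v x) (v y) \<le> v (x + y)"
  using ext_2adic unfolding ext_2adic_valuation_def by blast

lemma of_int: "n \<noteq> 0 \<Longrightarrow> of_int n \<noteq> (0::'a) \<and> v (of_int n) = real (multiplicity (2::int) n)"
  using ext_2adic unfolding ext_2adic_valuation_def by blast

lemma of_int_odd: "odd n \<Longrightarrow> of_int n \<noteq> (0::'a) \<and> v (of_int n) = 0"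
  using of_int[of n] not_dvd_imp_multiplicity_0[of 2 n] by fastforce

lemma of_int_double_odd:
  assumes "odd n"
  shows "of_int (2 * n) \<noteq> (0::'a) \<and> v (of_int (2 * n)) = 1"
proof -
  have "multiplicity (2::int) (2 * n) = 1"
    using multiplicity_times_same[where p = "2::int" and x = n] not_dvd_imp_multiplicity_0[of 2 n] assms
    by (cases "n = 0") simp_all
  moreover have "2 * n \<noteq> 0"
    using assms by auto
  ultimately show ?thesis
    using of_int[of "2 * n"] by simp
qed

lemma two: "(2::'a) \<noteq> 0 \<and> v 2 = 1"
  using of_int_double_odd[of 1] by simp

lemma uminus: "x \<noteq> 0 \<Longrightarrow> v (- x) = v x"
  using mult[of "-1" x] of_int_odd[of "-1"] by simp

lemma mult_sign: "s \<in> {1, -1} \<Longrightarrow> x \<noteq> 0 \<Longrightarrow> s * x \<noteq> 0 \<and> v (s * x) = v x"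
  using uminus[of x] by (elim insertE) simp_all

lemma power2: "x \<noteq> 0 \<Longrightarrow> v (x\<^sup>2) = 2 * v x"
  using mult[of x x] by (simp add: power2_eq_square)

lemma add_eq_left_if_less:
  assumes "a \<noteq> 0" "b \<noteq> 0" "v a < v b"
  shows "a + b \<noteq> 0 \<and> v (a + b) = v a"
proof -
  have "a + b \<noteq> 0"
  proof
    assume "a + b = 0"
    then have "b = - a"
      by (simp add: eq_neg_iff_add_eq_0 add.commute)
    with assms(3) uminus[OF assms(1)] show False
      by simp
  qed
  moreover have "v a \<le> v (a + b)"
    using ultrametric[OF assms(1,2) \<open>a + b \<noteq> 0\<close>] assms(3) by simp
  moreover have "min (v (a + b)) (v (- b)) \<le> v a"
    using ultrametric[OF \<open>a + b \<noteq> 0\<close>, of "- b"] assms(1,2) by simp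
  ultimately show ?thesis
    using uminus[OF assms(2)] assms(3) by linarith
qed

lemma add_of_int_eq_if_less:
  assumes "a \<noteq> 0" "2 ^ k dvd n" "v a < k"
  shows "a + of_int n \<noteq> 0 \<and> v (a + of_int n) = v a"
proof (cases "n = 0")
  case True
  with assms(1) show ?thesis
    by simp
next
  case False
  have "k \<le> multiplicity (2::int) n"
    using multiplicity_geI[OF False _ assms(2)] by simp
  then have "v a < v (of_int n)"
    using of_int[OF False] assms(3) by linarith
  then show ?thesis
    using add_eq_left_if_less[OF assms(1)] of_int[OF False] by blast
qed

lemma eq_if_diff_ge_average:
  assumes "a \<noteq> 0" "b \<noteq> 0" "(v a + v b) / 2 \<le> v (a - b)"
  shows "v a = v b"
proof (rule linorder_cases)
  assume "v a < v b"
  then have "v (a + - b) = v a"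
    using add_eq_left_if_less[of a "- b"] assms(1,2) uminus[OF assms(2)] by simp
  with assms(3) \<open>v a < v b\<close> show ?thesis by simp
next
  assume "v b < v a"
  then have "v (- b + a) = v b"
    using add_eq_left_if_less[of "- b" a] assms(1,2) uminus[OF assms(2)] by simp
  with assms(3) \<open>v b < v a\<close> show ?thesis by simp
qed

lemma eq_half_of_mult_if_diff_ge:
  assumes "a * b \<noteq> 0" "v (a * b) / 2 \<le> v (a - b)"
  shows "a \<noteq> 0 \<and> v a = v (a * b) / 2"
proof -
  have "a \<noteq> 0" "b \<noteq> 0"
    using assms(1) by simp_all
  moreover from calculation have "v a = v b"
    using eq_if_diff_ge_average assms(2) mult by simp
  ultimately show ?thesis
    using mult by simp
qed

lemma half_if_square_eq_c_times_succ:
  assumes "c mod 4 = 1" "z\<^sup>2 = of_int (c * (c + 1))"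
  shows "z \<noteq> 0 \<and> v z = 1 / 2"
proof -
  obtain k where k: "c = 4 * k + 1"
    using assms(1) by (metis div_mult_mod_eq add.commute mult.commute)
  have "odd (c * (2 * k + 1))"
    using k by simp
  moreover have "c * (c + 1) = 2 * (c * (2 * k + 1))"
    using k by (simp add: algebra_simps)
  ultimately have "z\<^sup>2 \<noteq> 0" "v (z\<^sup>2) = 1"
    using of_int_double_odd assms(2) by metis+
  then show ?thesis
    using power2[of z] by auto
qed

end

lemma sign_squared: "s \<in> {1, -1} \<Longrightarrow> s\<^sup>2 = (1::'a::ring_1)"
  by auto

lemma alpha_beta_squared:
  fixes c :: int and \<delta> \<alpha> \<beta> :: "'a::comm_ring_1"
  assumes "\<delta>\<^sup>2 = - of_int c" "\<alpha>\<^sup>2 = - of_int c + \<delta>" "\<beta>\<^sup>2 = - of_int c - \<delta>"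
  shows "(\<alpha> * \<beta>)\<^sup>2 = of_int (c * (c + 1))"
proof -
  have "(\<alpha> * \<beta>)\<^sup>2 = (- of_int c + \<delta>) * (- of_int c - \<delta>)"
    using assms(2,3) by (simp add: power_mult_distrib)
  also have "\<dots> = (of_int c)\<^sup>2 - \<delta>\<^sup>2"
    by (simp add: power2_eq_square algebra_simps)
  finally show ?thesis
    using assms(1) by (simp add: power2_eq_square algebra_simps)
qed

lemma signed_sum_times_conjugate:
  fixes c :: int and \<delta> \<alpha> \<beta> s1 s2 s3 :: "'a::comm_ring_1"
  assumes "\<delta>\<^sup>2 = - of_int c" "\<alpha>\<^sup>2 = - of_int c + \<delta>" "\<beta>\<^sup>2 = - of_int c - \<delta>"
    and "s1 \<in> {1, -1}" "s2 \<in> {1, -1}" "s3 \<in> {1, -1}"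
  shows "(s1 * \<alpha> + s2 * (\<alpha> * \<beta>) + s3 * \<beta>) * (s1 * \<alpha> - s2 * (\<alpha> * \<beta>) + s3 * \<beta>)
    = 2 * (s1 * s3 * (\<alpha> * \<beta>)) + of_int (- (c * (c + 3)))"
proof -
  have "(s1 * \<alpha> + s2 * (\<alpha> * \<beta>) + s3 * \<beta>) * (s1 * \<alpha> - s2 * (\<alpha> * \<beta>) + s3 * \<beta>)
      = s1\<^sup>2 * \<alpha>\<^sup>2 + s3\<^sup>2 * \<beta>\<^sup>2 + 2 * (s1 * s3 * (\<alpha> * \<beta>)) - s2\<^sup>2 * (\<alpha> * \<beta>)\<^sup>2"
    by (simp add: power2_eq_square algebra_simps)
  also have "\<dots> = - 2 * of_int c + 2 * (s1 * s3 * (\<alpha> * \<beta>)) - of_int (c * (c + 1))"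
    using assms(2,3) alpha_beta_squared[OF assms(1-3)]
      sign_squared[OF assms(4)] sign_squared[OF assms(5)] sign_squared[OF assms(6)] by simp
  finally show ?thesis
    by (simp add: algebra_simps)
qed

theorem corollary7p2:
  fixes v :: "'a::field \<Rightarrow> real" and c :: int and \<delta> \<alpha> \<beta> :: 'a
    and s1 s2 s3 :: 'a
  assumes "ext_2adic_valuation v"
    and "c mod 4 = 1"
    and "\<delta>^2 = - of_int c"
    and "\<alpha>^2 = - of_int c + \<delta>"
    and "\<beta>^2 = - of_int c - \<delta>"
    and "s1 \<in> {1, -1}" and "s2 \<in> {1, -1}" and "s3 \<in> {1, -1}"
  shows "s1 * \<alpha> + s2 * (\<alpha> * \<beta>) + s3 * \<beta> \<noteq> 0
         \<and> 8 * v (s1 * \<alpha> + s2 * (\<alpha> * \<beta>) + s3 * \<beta>) = 6"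
proof -
  interpret two_adic_valuation v by standard (fact assms(1))
  let ?a = "s1 * \<alpha> + s2 * (\<alpha> * \<beta>) + s3 * \<beta>" and ?b = "s1 * \<alpha> - s2 * (\<alpha> * \<beta>) + s3 * \<beta>"
  have \<gamma>: "\<alpha> * \<beta> \<noteq> 0" "v (\<alpha> * \<beta>) = 1 / 2"
    using half_if_square_eq_c_times_succ[OF assms(2) alpha_beta_squared[OF assms(3-5)]] by simp_all
  have twice_signed_\<gamma>: "2 * (s * (\<alpha> * \<beta>)) \<noteq> 0 \<and> v (2 * (s * (\<alpha> * \<beta>))) = 3 / 2"
    if "s \<in> {1, -1}" for s
    using mult_sign[OF that \<gamma>(1)] mult[of 2 "s * (\<alpha> * \<beta>)"] two \<gamma>(2) by simp
  have "s1 * s3 \<in> {1, -1}"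
    using assms(6,8) by auto
  then have cross: "2 * (s1 * s3 * (\<alpha> * \<beta>)) \<noteq> 0" "v (2 * (s1 * s3 * (\<alpha> * \<beta>))) = 3 / 2"
    using twice_signed_\<gamma> by blast+
  have "?a - ?b = 2 * (s2 * (\<alpha> * \<beta>))"
    by (simp add: algebra_simps)
  then have diff: "v (?a - ?b) = 3 / 2"
    using twice_signed_\<gamma>[OF assms(7)] by metis
  have "4 dvd c + 3"
    using assms(2) by presburger
  then have "2 ^ 2 dvd - (c * (c + 3))"
    by simp
  moreover have "v (2 * (s1 * s3 * (\<alpha> * \<beta>))) < real 2"
    using cross(2) by simp
  ultimately have "?a * ?b \<noteq> 0 \<and> v (?a * ?b) = 3 / 2"
    unfolding signed_sum_times_conjugate[OF assms(3-8)]
    using add_of_int_eq_if_less[OF cross(1)] cross(2) by metis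
  then show ?thesis
    using eq_half_of_mult_if_diff_ge[of ?a ?b] diff by simp
qed

end
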